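(* Let $X_1,\dots,X_n$ be $\mathbb{R}^d$-valued random vectors with sufficiently smooth joint density $p$ on $(\mathbb{R}^d)^n$, let $W=X_1+\dots+X_n$, let $J=I(W)$ be the Fisher information of $W$, and let $\mathbf{I}=(I_{ij})_{i,j=1}^n$ be the Fisher information matrix of $X=(X_1,\dots,X_n)$. Then for every $(\lambda_1,\dots,\lambda_n)\in\mathbb{R}^n$, $$ \Big(\sum_{i=1}^n \lambda_i\Big)^2 J \leq \sum_{i,j=1}^n \lambda_i\lambda_j I_{ij}. $$ Furthermore, when the matrix $\mathbf{I}$ is invertible, $$ \frac{1}{J}\geq \langle \mathbf{1}, \mathbf{I}^{-1}\mathbf{1}\rangle, $$ where $\mathbf{1}=(1,\dots,1)\in\mathbb{R}^n$.
   Context: For a random vector $V$ in $\mathbb{R}^m$ with smooth density $q$, its Fisher information is $I(V)=\int \frac{|\nabla q|^2}{q}$. For $X=(X_1,\dots,X_n)$ with joint density $p$ on $(\mathbb{R}^d)^n$, write $x=(x_1,\dots,x_n)$, $x_i\in\mathbb{R}^d$, let $\nabla_i$ be the gradient with respect to $x_i$, and set $\rho_i=-\nabla_i p/p\in\mathbb{R}^d$. The Fisher information matrix is the $n\times n$ matrix with entries $I_{ij}=I_{ij}(X)=\mathbb{E}\langle\rho_i(X),\rho_j(X)\rangle$, where $\langle\cdot,\cdot\rangle$ is the Euclidean inner product. Standing assumptions: finite second moments and finite entropies. *)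

theory Defs
  imports "HOL-Analysis.Analysis" "HOL-Probability.Probability"
begin

text \<open>Points of (R^d)^n are represented as elements of real^'d^'n:
  x $ i :: real^'d is the i-th block x_i.\<close>

definition grad :: "(real^'d \<Rightarrow> real) \<Rightarrow> real^'d \<Rightarrow> real^'d" where
  "grad q w = (\<chi> k. frechet_derivative q (at w) (axis k 1))"

definition partial_grad :: "(real^'d^'n \<Rightarrow> real) \<Rightarrow> 'n \<Rightarrow> real^'d^'n \<Rightarrow> real^'d" where
  "partial_grad p i x = (\<chi> k. frechet_derivative p (at x) (axis i (axis k 1)))"

text \<open>Fisher information I(V) = int |grad q|^2 / q  (integrand is 0 where q = 0,
  by the HOL convention x / 0 = 0).\<close>
definition fisher_info :: "(real^'d \<Rightarrow> real) \<Rightarrow> real" where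
  "fisher_info q = (\<integral>w. (norm (grad q w))\<^sup>2 / q w \<partial>lborel)"

text \<open>Entries I_ij = E <rho_i(X), rho_j(X)> = int <nabla_i p, nabla_j p> / p.\<close>
definition fisher_entry :: "(real^'d^'n \<Rightarrow> real) \<Rightarrow> 'n \<Rightarrow> 'n \<Rightarrow> real" where
  "fisher_entry p i j = (\<integral>x. (partial_grad p i x \<bullet> partial_grad p j x) / p x \<partial>lborel)"

definition fisher_matrix :: "(real^'d^'n \<Rightarrow> real) \<Rightarrow> real^'n^'n" where
  "fisher_matrix p = (\<chi> i j. fisher_entry p i j)"

end

theory Submission
  imports Defs
begin

(* The score of W is the conditional expectation of every block score given W.  Weakly:
   differentiating E phi(W) = int p(x) phi(x_1 + ... + x_n) dx along the block x_i gives, for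
   bounded continuous psi,  (sum_i l_i) int <grad q, psi> = int <G(x), psi(x_1 + ... + x_n)> dx
   with G = sum_i l_i nabla_i p.  Cauchy-Schwarz weighted by p bounds the square of the right
   side by (l^T I l) int q |psi|^2.  For psi a bounded continuous approximation of grad q / q
   both integrals on the left tend to J, which gives (sum_i l_i)^2 J <= l^T I l.  The second
   inequality is the first one for l = I^-1 1, using J > 0. *)

lemma lborel_integral_translate:
  fixes f :: "'a::euclidean_space \<Rightarrow> 'b::{banach, second_countable_topology}"
  assumes [measurable]: "f \<in> borel_measurable borel"
  shows "(\<integral>x. f (x + c) \<partial>lborel) = (\<integral>x. f x \<partial>lborel)"
proof -
  have "(\<integral>x. f x \<partial>lborel) = (\<integral>x. f x \<partial>distr lborel borel ((+) c))" by (simp add: lborel_distr_plus)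
  also have "\<dots> = (\<integral>x. f (c + x) \<partial>lborel)"
    by (rule integral_distr) auto
  finally show ?thesis by (simp add: add.commute)
qed

lemma lborel_integrable_translate:
  fixes f :: "'a::euclidean_space \<Rightarrow> 'b::{banach, second_countable_topology}"
  assumes [measurable]: "f \<in> borel_measurable borel"
  shows "integrable lborel (\<lambda>x. f (x + c)) \<longleftrightarrow> integrable lborel f"
proof -
  have "integrable lborel f \<longleftrightarrow> integrable (distr lborel borel ((+) c)) f" by (simp add: lborel_distr_plus)
  also have "\<dots> \<longleftrightarrow> integrable lborel (\<lambda>x. f (c + x))"
    by (rule integrable_distr_eq) auto
  finally show ?thesis by (simp add: add.commute)
qed

lemma increment_eq_integral_directional_derivative:
  fixes f :: "'a::euclidean_space \<Rightarrow> real"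
  assumes diff: "\<And>y. f differentiable (at y)"
    and cont: "continuous_on UNIV (\<lambda>y. frechet_derivative f (at y) v)"
    and t: "0 \<le> t"
  shows "f (x + t *\<^sub>R v) - f x = (\<integral>s. indicator {0..t} s * frechet_derivative f (at (x + s *\<^sub>R v)) v \<partial>lborel)"
proof -
  define D where "D y = frechet_derivative f (at y) v" for y
  have der: "((\<lambda>s. f (x + s *\<^sub>R v)) has_vector_derivative D (x + s *\<^sub>R v)) (at s within S)" for s S
  proof -
    have f_deriv: "(f has_derivative frechet_derivative f (at (x + s *\<^sub>R v))) (at (x + s *\<^sub>R v))"
      using diff frechet_derivative_works by blast
    have line_deriv: "((\<lambda>s. x + s *\<^sub>R v) has_derivative (\<lambda>h. h *\<^sub>R v)) (at s within S)"
      by (auto intro!: derivative_eq_intros)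
    have "((\<lambda>s. f (x + s *\<^sub>R v)) has_derivative (\<lambda>h. frechet_derivative f (at (x + s *\<^sub>R v)) (h *\<^sub>R v))) (at s within S)"
      by (rule has_derivative_compose[OF line_deriv f_deriv])
    moreover have "(\<lambda>h. frechet_derivative f (at (x + s *\<^sub>R v)) (h *\<^sub>R v)) = (\<lambda>h. h *\<^sub>R D (x + s *\<^sub>R v))"
      using has_derivative_linear[OF f_deriv] by (auto simp: D_def linear_scale)
    ultimately show ?thesis unfolding has_vector_derivative_def by simp
  qed
  have D_cont: "continuous_on {min 0 t..max 0 t} (\<lambda>s. D (x + s *\<^sub>R v))"
    using cont unfolding D_def
    by (intro continuous_on_compose2[OF cont]) (auto intro!: continuous_intros)
  have "(LBINT s=ereal 0..ereal t. D (x + s *\<^sub>R v)) = f (x + t *\<^sub>R v) - f (x + 0 *\<^sub>R v)"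
    by (rule interval_integral_FTC_finite[OF D_cont]) (rule der)
  also have "(LBINT s=ereal 0..ereal t. D (x + s *\<^sub>R v)) = (LBINT s:{0..t}. D (x + s *\<^sub>R v))"
    using t by (rule interval_integral_Icc)
  finally show ?thesis by (simp add: set_lebesgue_integral_def D_def mult.commute)
qed

lemma continuous_zero_if_integrals_zero:
  fixes g :: "real \<Rightarrow> real"
  assumes c: "continuous_on UNIV g" and z: "\<And>t. 0 \<le> t \<Longrightarrow> (\<integral>s. indicator {0..t} s * g s \<partial>lborel) = 0"
  shows "g 0 = 0"
proof -
  have "continuous_on {0..1} g" using c continuous_on_subset by blast
  then have FTC: "((\<lambda>u. LBINT y=ereal 0..ereal u. g y) has_vector_derivative g 0) (at 0 within {0..1})"
    by (rule interval_integral_FTC2[rotated 2]) auto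
  have vanish: "(LBINT y=ereal 0..ereal u. g y) = 0" if "u \<in> {0..1}" for u
  proof -
    have "(LBINT y=ereal 0..ereal u. g y) = (LBINT y:{0..u}. g y)" using that by (intro interval_integral_Icc) auto
    also have "\<dots> = 0" using z[of u] that by (simp add: set_lebesgue_integral_def)
    finally show ?thesis .
  qed
  have "((\<lambda>u. 0::real) has_vector_derivative g 0) (at 0 within {0..1})"
    by (rule has_vector_derivative_transform[OF _ _ FTC]) (use vanish in auto)
  then show ?thesis
    using vector_derivative_unique_within_closed_interval[of 0 1 0 "\<lambda>u. 0::real" "g 0" 0]
      has_vector_derivative_const
    by simp
qed

lemma integrable_mult_bounded:
  fixes f g :: "'a \<Rightarrow> real"
  assumes "integrable M f" "g \<in> borel_measurable M" "\<And>x. \<bar>g x\<bar> \<le> B"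
  shows "integrable M (\<lambda>x. f x * g x)"
proof (rule Bochner_Integration.integrable_bound[where f="\<lambda>x. B * f x"])
  show "integrable M (\<lambda>x. B * f x)" using assms(1) by simp
  show "(\<lambda>x. f x * g x) \<in> borel_measurable M" using assms by measurable
  have B0: "0 \<le> B" using assms(3) order_trans abs_ge_zero by blast
  show "AE x in M. norm (f x * g x) \<le> norm (B * f x)"
  proof (rule AE_I2)
    fix x
    have "\<bar>f x\<bar> * \<bar>g x\<bar> \<le> \<bar>f x\<bar> * B" by (rule mult_left_mono[OF assms(3)]) simp
    then show "norm (f x * g x) \<le> norm (B * f x)" using B0 by (simp add: abs_mult mult.commute)
  qed
qed

lemma integrable_indicator_translate_mult:
  fixes D \<psi> :: "'a::euclidean_space \<Rightarrow> real"
  assumes [measurable]: "D \<in> borel_measurable borel" "\<psi> \<in> borel_measurable borel"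
    and D_int: "integrable lborel D" and \<psi>_bound: "\<And>x. \<bar>\<psi> x\<bar> \<le> B"
  shows "integrable (lborel \<Otimes>\<^sub>M lborel) (\<lambda>(s, x). indicator {0..t} s * D (x + s *\<^sub>R v) * \<psi> x)"
    (is "integrable _ ?F")
proof (rule lborel_pair.Fubini_integrable)
  have B: "0 \<le> B" using \<psi>_bound[of 0] by linarith
  define N where "N = (\<integral>x. norm (D x) \<partial>lborel)"
  have N: "0 \<le> N" unfolding N_def by (rule integral_nonneg_AE) simp
  have shifted_int: "integrable lborel (\<lambda>x. D (x + c))" for c
    using D_int lborel_integrable_translate[of D] by simp
  have slice_int: "integrable lborel (\<lambda>x. D (x + s *\<^sub>R v) * \<psi> x)" for s
    by (rule integrable_mult_bounded[OF shifted_int _ \<psi>_bound]) simp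
  show "?F \<in> borel_measurable (lborel \<Otimes>\<^sub>M lborel)" by measurable
  show "AE s in lborel. integrable lborel (\<lambda>x. ?F (s, x))"
    using slice_int by (simp add: mult.assoc)
  have "integrable lborel (\<lambda>s. \<integral>x. norm (indicator {0..t} s * D (x + s *\<^sub>R v) * \<psi> x) \<partial>lborel)"
  proof (rule Bochner_Integration.integrable_bound[where f = "\<lambda>s. B * N * indicator {0..t} s"])
    show "integrable lborel (\<lambda>s. B * N * indicator {0..t} s)"
      by (rule borel_integrable_atLeastAtMost) auto
    show "(\<lambda>s. \<integral>x. norm (indicator {0..t} s * D (x + s *\<^sub>R v) * \<psi> x) \<partial>lborel)
        \<in> borel_measurable lborel" by measurable
    show "AE s in lborel. norm (\<integral>x. norm (indicator {0..t} s * D (x + s *\<^sub>R v) * \<psi> x) \<partial>lborel)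
        \<le> norm (B * N * indicator {0..t} s)"
    proof (rule AE_I2)
      fix s :: real
      have "(\<integral>x. norm (D (x + s *\<^sub>R v) * \<psi> x) \<partial>lborel) \<le> (\<integral>x. norm (D (x + s *\<^sub>R v)) * B \<partial>lborel)"
        using \<psi>_bound by (intro integral_mono integrable_norm slice_int shifted_int integrable_mult_left)
          (auto simp: abs_mult intro: mult_left_mono)
      also have "\<dots> = N * B"
        using lborel_integral_translate[of "\<lambda>x. norm (D x)" "s *\<^sub>R v"] by (simp add: N_def)
      finally have "(\<integral>x. norm (D (x + s *\<^sub>R v) * \<psi> x) \<partial>lborel) \<le> N * B" .
      moreover have "0 \<le> (\<integral>x. norm (D (x + s *\<^sub>R v) * \<psi> x) \<partial>lborel)"
        by (rule integral_nonneg_AE) auto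
      ultimately show "norm (\<integral>x. norm (indicator {0..t} s * D (x + s *\<^sub>R v) * \<psi> x) \<partial>lborel)
          \<le> norm (B * N * indicator {0..t} s)"
        using B N by (auto split: split_indicator simp: abs_mult mult.commute)
    qed
  qed
  then show "integrable lborel (\<lambda>s. \<integral>x. norm (?F (s, x)) \<partial>lborel)" by simp
qed

lemma integral_increment_mult_eq:
  fixes f D \<psi> :: "'a::euclidean_space \<Rightarrow> real"
  assumes diff: "\<And>y. f differentiable (at y)"
    and D: "\<And>y. D y = frechet_derivative f (at y) v"
    and D_cont: "continuous_on UNIV D" and D_int: "integrable lborel D"
    and \<psi>_cont: "continuous_on UNIV \<psi>" and \<psi>_bound: "\<And>x. \<bar>\<psi> x\<bar> \<le> B"
    and t: "0 \<le> t"
  shows "(\<integral>x. (f (x + t *\<^sub>R v) - f x) * \<psi> x \<partial>lborel)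
          = (\<integral>s. indicator {0..t} s * (\<integral>x. D x * \<psi> (x - s *\<^sub>R v) \<partial>lborel) \<partial>lborel)"
proof -
  have D_meas[measurable]: "D \<in> borel_measurable borel"
    and \<psi>_meas[measurable]: "\<psi> \<in> borel_measurable borel"
    using D_cont \<psi>_cont by (auto intro: borel_measurable_continuous_onI)
  define G where "G = (\<lambda>(x, s). indicator {0..t} s * D (x + s *\<^sub>R v) * \<psi> x)"
  have G_int: "integrable (lborel \<Otimes>\<^sub>M lborel) G"
    using lborel_pair.integrable_product_swap[OF
        integrable_indicator_translate_mult[OF D_meas \<psi>_meas D_int \<psi>_bound, where t=t and v=v]]
    by (simp add: G_def case_prod_beta')
  have integral_s: "(\<integral>s. G (x, s) \<partial>lborel) = (f (x + t *\<^sub>R v) - f x) * \<psi> x" for x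
    using increment_eq_integral_directional_derivative[OF diff _ t, of v x] D_cont
    by (simp add: G_def D[abs_def])
  have integral_x: "(\<integral>x. G (x, s) \<partial>lborel) = indicator {0..t} s * (\<integral>x. D x * \<psi> (x - s *\<^sub>R v) \<partial>lborel)" for s
    using lborel_integral_translate[of "\<lambda>x. D x * \<psi> (x - s *\<^sub>R v)" "s *\<^sub>R v"]
    by (simp add: G_def mult.assoc)
  show ?thesis
    using lborel_pair.Fubini_integral[of "\<lambda>x s. G (x, s)"] G_int
    by (simp add: integral_s integral_x)
qed

lemma continuous_on_integral_mult_translate:
  fixes D \<psi> :: "'a::euclidean_space \<Rightarrow> real"
  assumes D_int: "integrable lborel D"
    and \<psi>_cont: "continuous_on UNIV \<psi>" and \<psi>_bound: "\<And>x. \<bar>\<psi> x\<bar> \<le> B"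
  shows "continuous_on UNIV (\<lambda>s::real. \<integral>x. D x * \<psi> (x - s *\<^sub>R v) \<partial>lborel)"
proof (rule continuous_on_sequentiallyI)
  fix u :: "nat \<Rightarrow> real" and a assume u: "u \<longlonglongrightarrow> a"
  have \<psi>_meas[measurable]: "\<psi> \<in> borel_measurable borel" using \<psi>_cont by (rule borel_measurable_continuous_onI)
  have D_meas[measurable]: "D \<in> borel_measurable lborel" using D_int by auto
  show "(\<lambda>n. \<integral>x. D x * \<psi> (x - u n *\<^sub>R v) \<partial>lborel) \<longlonglongrightarrow> (\<integral>x. D x * \<psi> (x - a *\<^sub>R v) \<partial>lborel)"
  proof (rule integral_dominated_convergence[where w="\<lambda>x. B * norm (D x)"])
    show "(\<lambda>x. D x * \<psi> (x - a *\<^sub>R v)) \<in> borel_measurable lborel" by measurable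
    show "(\<lambda>x. D x * \<psi> (x - u n *\<^sub>R v)) \<in> borel_measurable lborel" for n by measurable
    show "integrable lborel (\<lambda>x. B * norm (D x))" using D_int by auto
    show "AE x in lborel. (\<lambda>n. D x * \<psi> (x - u n *\<^sub>R v)) \<longlonglongrightarrow> D x * \<psi> (x - a *\<^sub>R v)"
    proof (rule AE_I2)
      fix x
      have "(\<lambda>n. x - u n *\<^sub>R v) \<longlonglongrightarrow> x - a *\<^sub>R v" by (intro tendsto_intros u)
      moreover have "isCont \<psi> (x - a *\<^sub>R v)" using \<psi>_cont by (simp add: continuous_on_eq_continuous_at)
      ultimately have "(\<lambda>n. \<psi> (x - u n *\<^sub>R v)) \<longlonglongrightarrow> \<psi> (x - a *\<^sub>R v)"
        using isCont_tendsto_compose by blast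
      then show "(\<lambda>n. D x * \<psi> (x - u n *\<^sub>R v)) \<longlonglongrightarrow> D x * \<psi> (x - a *\<^sub>R v)"
        by (intro tendsto_intros)
    qed
    show "AE x in lborel. norm (D x * \<psi> (x - u n *\<^sub>R v)) \<le> B * norm (D x)" for n
    proof (rule AE_I2)
      fix x
      have "\<bar>D x\<bar> * \<bar>\<psi> (x - u n *\<^sub>R v)\<bar> \<le> \<bar>D x\<bar> * B" by (rule mult_left_mono[OF \<psi>_bound]) simp
      then show "norm (D x * \<psi> (x - u n *\<^sub>R v)) \<le> B * norm (D x)" by (simp add: abs_mult mult.commute)
    qed
  qed
qed

lemma integral_directional_derivative_eq:
  fixes f Df \<phi> :: "'a::euclidean_space \<Rightarrow> real" and g Dg \<eta> :: "'b::euclidean_space \<Rightarrow> real"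
  assumes f: "\<And>x. f differentiable (at x)" "\<And>x. Df x = frechet_derivative f (at x) u"
      "continuous_on UNIV Df" "integrable lborel Df"
    and g: "\<And>y. g differentiable (at y)" "\<And>y. Dg y = frechet_derivative g (at y) v"
      "continuous_on UNIV Dg" "integrable lborel Dg"
    and \<phi>: "continuous_on UNIV \<phi>" "\<And>x. \<bar>\<phi> x\<bar> \<le> B"
    and \<eta>: "continuous_on UNIV \<eta>" "\<And>y. \<bar>\<eta> y\<bar> \<le> B"
    and increments: "\<And>t. 0 \<le> t \<Longrightarrow>
      (\<integral>x. (f (x + t *\<^sub>R u) - f x) * \<phi> x \<partial>lborel) = (\<integral>y. (g (y + t *\<^sub>R v) - g y) * \<eta> y \<partial>lborel)"
  shows "(\<integral>x. Df x * \<phi> x \<partial>lborel) = (\<integral>y. Dg y * \<eta> y \<partial>lborel)"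
proof -
  define \<Phi> where "\<Phi> s = (\<integral>x. Df x * \<phi> (x - s *\<^sub>R u) \<partial>lborel)" for s
  define Y where "Y s = (\<integral>y. Dg y * \<eta> (y - s *\<^sub>R v) \<partial>lborel)" for s
  have \<Phi>_cont: "continuous_on UNIV \<Phi>" and Y_cont: "continuous_on UNIV Y"
    unfolding \<Phi>_def[abs_def] Y_def[abs_def]
    by (rule continuous_on_integral_mult_translate[OF f(4) \<phi>]
             continuous_on_integral_mult_translate[OF g(4) \<eta>])+
  \<comment> \<open>By Fubini both sides of the increment identity are integrals of \<Phi> and Y over [0, t].\<close>
  have "(\<integral>s. indicator {0..t} s * (\<Phi> s - Y s) \<partial>lborel) = 0" if t: "0 \<le> t" for t
  proof -
    have integrable: "integrable lborel (\<lambda>s. indicator {0..t} s * F s)" if "continuous_on UNIV F" for F :: "real \<Rightarrow> real"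
      using borel_integrable_atLeastAtMost[of 0 t F] that
      by (simp add: mult.commute continuous_on_eq_continuous_at)
    have "(\<integral>s. indicator {0..t} s * \<Phi> s \<partial>lborel) = (\<integral>s. indicator {0..t} s * Y s \<partial>lborel)"
      using integral_increment_mult_eq[OF f \<phi> t] integral_increment_mult_eq[OF g \<eta> t] increments[OF t]
      by (simp add: \<Phi>_def Y_def)
    then show ?thesis
      using Bochner_Integration.integral_diff[OF integrable[OF \<Phi>_cont] integrable[OF Y_cont]]
      by (simp add: right_diff_distrib)
  qed
  then have "\<Phi> 0 - Y 0 = 0"
    using continuous_zero_if_integrals_zero[OF continuous_on_diff[OF \<Phi>_cont Y_cont]] by blast
  then show ?thesis by (simp add: \<Phi>_def Y_def)
qed

lemma frechet_derivative_zero_at_min: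
  fixes g :: "'a::euclidean_space \<Rightarrow> real"
  assumes "\<And>y. 0 \<le> g y" "g w = 0" "g differentiable (at w)"
  shows "frechet_derivative g (at w) = (\<lambda>v. 0)"
proof -
  have "(g has_derivative frechet_derivative g (at w)) (at w)"
    using assms(3) frechet_derivative_works by blast
  then show ?thesis
    using differential_zero_maxmin[of w UNIV g] assms by auto
qed

lemma mult_le_weighted_amgm:
  fixes u z a c :: real
  assumes "0 \<le> u" "0 \<le> z" "0 < a" "0 \<le> c" "c = 0 \<Longrightarrow> u = 0"
  shows "u * z \<le> (a * (u\<^sup>2 / c) + c * z\<^sup>2 / a) / 2"
proof (cases "c = 0")
  case True then show ?thesis using assms by simp
next
  case False
  then have c: "c > 0" using assms by simp
  have "0 \<le> (a * u - c * z)\<^sup>2 / (a * c)" using c assms by simp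
  also have "(a * u - c * z)\<^sup>2 / (a * c) = a * (u\<^sup>2 / c) + c * z\<^sup>2 / a - 2 * (u * z)"
    using c assms by (simp add: field_simps power2_eq_square)
  finally show ?thesis by simp
qed

lemma square_le_mult_if_amgm_bound:
  fixes c A B :: real
  assumes "0 \<le> A" "0 \<le> B" and bound: "\<And>a. 0 < a \<Longrightarrow> \<bar>c\<bar> \<le> (a * A + B / a) / 2"
  shows "c\<^sup>2 \<le> A * B"
proof (cases "c = 0")
  case True then show ?thesis using assms by simp
next
  case False
  then have c: "0 < \<bar>c\<bar>" by simp
  show ?thesis
  proof (cases "A = 0")
    case True
    have "0 < (B + 1) / \<bar>c\<bar>" using c assms by simp
    then have "\<bar>c\<bar> \<le> B / ((B + 1) / \<bar>c\<bar>) / 2" using bound[of "(B + 1) / \<bar>c\<bar>"] True by simp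
    also have "\<dots> < \<bar>c\<bar>" using c \<open>0 \<le> B\<close> by (simp add: field_simps add_nonneg_pos)
    finally show ?thesis by simp
  next
    case False
    then have A: "0 < A" using assms by simp
    have "\<bar>c\<bar> \<le> (\<bar>c\<bar> + A * B / \<bar>c\<bar>) / 2" using bound[of "\<bar>c\<bar> / A"] A c by (simp add: mult.commute)
    then have "\<bar>c\<bar> * \<bar>c\<bar> \<le> A * B" using c by (simp add: field_simps)
    then show ?thesis by (simp add: power2_eq_square)
  qed
qed

lemma weighted_Cauchy_Schwarz_integral:
  fixes u z :: "'a \<Rightarrow> 'b::{second_countable_topology, real_inner}" and w :: "'a \<Rightarrow> real"
  assumes [measurable]: "u \<in> borel_measurable M" "z \<in> borel_measurable M"
    and w: "\<And>x. 0 \<le> w x" "\<And>x. w x = 0 \<Longrightarrow> u x = 0"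
    and u_int: "integrable M (\<lambda>x. (norm (u x))\<^sup>2 / w x)"
    and z_int: "integrable M (\<lambda>x. w x * (norm (z x))\<^sup>2)"
  shows "(\<integral>x. u x \<bullet> z x \<partial>M)\<^sup>2 \<le> (\<integral>x. (norm (u x))\<^sup>2 / w x \<partial>M) * (\<integral>x. w x * (norm (z x))\<^sup>2 \<partial>M)"
proof (rule square_le_mult_if_amgm_bound)
  show "0 \<le> (\<integral>x. (norm (u x))\<^sup>2 / w x \<partial>M)" "0 \<le> (\<integral>x. w x * (norm (z x))\<^sup>2 \<partial>M)"
    using w by (auto intro!: integral_nonneg_AE)
  fix a :: real assume a: "0 < a"
  define b where "b x = (a * ((norm (u x))\<^sup>2 / w x) + w x * (norm (z x))\<^sup>2 / a) / 2" for x
  have b_int: "integrable M b"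
    unfolding b_def[abs_def]
    by (intro integrable_divide_zero Bochner_Integration.integrable_add integrable_mult_right u_int z_int)
  have pointwise: "\<bar>u x \<bullet> z x\<bar> \<le> b x" for x
  proof -
    have "\<bar>u x \<bullet> z x\<bar> \<le> norm (u x) * norm (z x)" by (rule Cauchy_Schwarz_ineq2)
    also have "\<dots> \<le> b x"
      unfolding b_def using a w[of x] by (intro mult_le_weighted_amgm) auto
    finally show ?thesis .
  qed
  have "integrable M (\<lambda>x. u x \<bullet> z x)"
    by (rule Bochner_Integration.integrable_bound[OF b_int])
      (auto intro!: AE_I2 order_trans[OF pointwise])
  then have "(\<integral>x. \<bar>u x \<bullet> z x\<bar> \<partial>M) \<le> (\<integral>x. b x \<partial>M)"
    using b_int pointwise by (intro integral_mono) auto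
  then have "\<bar>\<integral>x. u x \<bullet> z x \<partial>M\<bar> \<le> (\<integral>x. b x \<partial>M)"
    by (rule order_trans[OF integral_abs_bound])
  also have "\<dots> = (a * (\<integral>x. (norm (u x))\<^sup>2 / w x \<partial>M) + (\<integral>x. w x * (norm (z x))\<^sup>2 \<partial>M) / a) / 2"
    unfolding b_def integral_divide_zero integral_mult_right_zero
      Bochner_Integration.integral_add[OF integrable_mult_right[OF u_int] integrable_divide_zero[OF z_int]] ..
  finally show "\<bar>\<integral>x. u x \<bullet> z x \<partial>M\<bar> \<le> (a * (\<integral>x. (norm (u x))\<^sup>2 / w x \<partial>M) + (\<integral>x. w x * (norm (z x))\<^sup>2 \<partial>M) / a) / 2" .
qed

lemma norm_sum_scaleR_squared:
  fixes a :: "'i::finite \<Rightarrow> 'v::real_inner" and l :: "real^'i"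
  shows "(norm (\<Sum>i\<in>UNIV. l $ i *\<^sub>R a i))\<^sup>2 = (\<Sum>i\<in>UNIV. \<Sum>j\<in>UNIV. l $ i * l $ j * (a i \<bullet> a j))"
proof -
  have "(norm (\<Sum>i\<in>UNIV. l $ i *\<^sub>R a i))\<^sup>2 = (\<Sum>i\<in>UNIV. l $ i *\<^sub>R a i) \<bullet> (\<Sum>j\<in>UNIV. l $ j *\<^sub>R a j)"
    by (simp only: power2_norm_eq_inner)
  also have "\<dots> = (\<Sum>i\<in>UNIV. (l $ i *\<^sub>R a i) \<bullet> (\<Sum>j\<in>UNIV. l $ j *\<^sub>R a j))"
    by (rule inner_sum_left)
  also have "\<dots> = (\<Sum>i\<in>UNIV. \<Sum>j\<in>UNIV. (l $ i *\<^sub>R a i) \<bullet> (l $ j *\<^sub>R a j))"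
    by (simp only: inner_sum_right)
  also have "\<dots> = (\<Sum>i\<in>UNIV. \<Sum>j\<in>UNIV. l $ i * l $ j * (a i \<bullet> a j))"
    by (intro sum.cong refl) (simp add: algebra_simps)
  finally show ?thesis .
qed

lemma matrix_mul_matrix_inv:
  fixes A :: "real^'n^'n"
  assumes "invertible A"
  shows "A ** matrix_inv A = mat 1"
  using someI_ex[OF assms[unfolded invertible_def]] unfolding matrix_inv_def by blast

(* A bounded continuous approximation of the score g / q, used with g = grad q. *)
definition regularized_score :: "real \<Rightarrow> ('a \<Rightarrow> real) \<Rightarrow> ('a \<Rightarrow> 'b::real_normed_vector) \<Rightarrow> 'a \<Rightarrow> 'b"
  where "regularized_score \<epsilon> q g w = g w /\<^sub>R max (q w) (max \<epsilon> (\<epsilon> * norm (g w)))"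

lemma norm_regularized_score_le:
  assumes "0 < \<epsilon>"
  shows "norm (regularized_score \<epsilon> q g w) \<le> 1 / \<epsilon>"
proof -
  define d where "d = max (q w) (max \<epsilon> (\<epsilon> * norm (g w)))"
  have "0 < d" "\<epsilon> * norm (g w) \<le> d" using assms by (auto simp: d_def)
  then have "norm (g w) / d \<le> 1 / \<epsilon>" using assms by (simp add: field_simps)
  then show ?thesis using \<open>0 < d\<close> by (simp add: regularized_score_def d_def[symmetric] divide_inverse_commute)
qed

lemma continuous_on_regularized_score:
  assumes "continuous_on UNIV q" "continuous_on UNIV g" "0 < \<epsilon>"
  shows "continuous_on UNIV (regularized_score \<epsilon> q g)"
  unfolding regularized_score_def[abs_def] scaleR_conv_of_real divide_inverse
  using assms by (intro continuous_intros) auto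

lemma regularized_score_inner_bounds:
  fixes g :: "'a \<Rightarrow> 'b::real_inner" and q :: "'a \<Rightarrow> real" and w :: 'a
  assumes "0 < \<epsilon>" "0 \<le> q w"
  defines "r \<equiv> regularized_score \<epsilon> q g w"
  shows "q w * (norm r)\<^sup>2 \<le> g w \<bullet> r" and "0 \<le> g w \<bullet> r"
    and "(q w = 0 \<Longrightarrow> g w = 0) \<Longrightarrow> g w \<bullet> r \<le> (norm (g w))\<^sup>2 / q w"
proof -
  define d where "d = max (q w) (max \<epsilon> (\<epsilon> * norm (g w)))"
  have d: "0 < d" "q w \<le> d" "0 \<le> q w" using assms by (auto simp: d_def)
  have inner: "g w \<bullet> r = (norm (g w))\<^sup>2 / d"
    by (simp add: r_def regularized_score_def d_def[symmetric] power2_norm_eq_inner divide_inverse)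
  have "q w * (norm r)\<^sup>2 = (q w / d) * ((norm (g w))\<^sup>2 / d)"
    using d by (simp add: r_def regularized_score_def d_def[symmetric] power2_eq_square field_simps)
  also have "\<dots> \<le> (norm (g w))\<^sup>2 / d"
    using d by (intro mult_left_le_one_le) auto
  finally show "q w * (norm r)\<^sup>2 \<le> g w \<bullet> r" by (simp add: inner)
  show "0 \<le> g w \<bullet> r" using d by (simp add: inner)
  assume "q w = 0 \<Longrightarrow> g w = 0"
  then show "g w \<bullet> r \<le> (norm (g w))\<^sup>2 / q w"
    using d by (cases "q w = 0") (auto simp: inner intro: divide_left_mono)
qed

lemma tendsto_inner_regularized_score:
  fixes g :: "'a \<Rightarrow> 'b::real_inner"
  assumes "0 \<le> q w" "q w = 0 \<Longrightarrow> g w = 0"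
  shows "(\<lambda>m. g w \<bullet> regularized_score (inverse (Suc m)) q g w) \<longlonglongrightarrow> (norm (g w))\<^sup>2 / q w"
proof (cases "q w = 0")
  case True then show ?thesis using assms by (simp add: regularized_score_def)
next
  case False
  then have q: "0 < q w" using assms by simp
  have "(\<lambda>m. max (q w) (max (inverse (Suc m)) (inverse (Suc m) * norm (g w))))
      \<longlonglongrightarrow> max (q w) (max 0 (0 * norm (g w)))"
    by (intro tendsto_intros LIMSEQ_inverse_real_of_nat)
  then have "(\<lambda>m. (norm (g w))\<^sup>2 / max (q w) (max (inverse (Suc m)) (inverse (Suc m) * norm (g w))))
      \<longlonglongrightarrow> (norm (g w))\<^sup>2 / q w"
    using q by (intro tendsto_intros) auto
  then show ?thesis
    by (simp add: regularized_score_def power2_norm_eq_inner divide_inverse mult.commute)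
qed

lemma integrable_norm_if_integrable_norm_squared_divide:
  fixes g :: "'a \<Rightarrow> 'b::{second_countable_topology, real_normed_vector}"
  assumes [measurable]: "g \<in> borel_measurable M"
    and f: "integrable M f" "\<And>x. 0 \<le> f x" "\<And>x. f x = 0 \<Longrightarrow> g x = 0"
    and g_int: "integrable M (\<lambda>x. (norm (g x))\<^sup>2 / f x)"
  shows "integrable M (\<lambda>x. norm (g x))"
proof (rule Bochner_Integration.integrable_bound)
  show "integrable M (\<lambda>x. (norm (g x))\<^sup>2 / f x + f x)"
    using g_int f(1) by simp
  show "AE x in M. norm (norm (g x)) \<le> norm ((norm (g x))\<^sup>2 / f x + f x)"
  proof (rule AE_I2)
    fix x
    have "norm (g x) * 2 \<le> (norm (g x))\<^sup>2 / f x + f x"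
      using f mult_le_weighted_amgm[of "norm (g x)" 1 1 "f x"] by simp
    then show "norm (norm (g x)) \<le> norm ((norm (g x))\<^sup>2 / f x + f x)"
      using norm_ge_zero[of "g x"] by simp
  qed
qed simp

lemma constant_if_grad_eq_0:
  fixes q :: "real^'d \<Rightarrow> real"
  assumes diff: "\<And>w. q differentiable (at w)" and grad_0: "\<And>w. grad q w = 0"
  obtains c where "\<And>w. q w = c"
proof -
  have "frechet_derivative q (at w) h = 0" for w h
  proof -
    have "linear (frechet_derivative q (at w))"
      using diff frechet_derivative_works has_derivative_linear by blast
    moreover have "frechet_derivative q (at w) (axis k 1) = 0" for k
      using grad_0[of w] by (simp add: grad_def vec_eq_iff)
    ultimately have "frechet_derivative q (at w) (\<Sum>k\<in>UNIV. h $ k *\<^sub>R axis k 1) = 0"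
      by (simp add: linear_sum linear_scale)
    then show ?thesis
      using basis_expansion[of h] by (simp add: scalar_mult_eq_scaleR)
  qed
  moreover have "(q has_derivative frechet_derivative q (at w)) (at w)" for w
    using diff frechet_derivative_works by blast
  ultimately have "(q has_derivative (\<lambda>h. 0)) (at w within UNIV)" for w
    by (metis (no_types) ext)
  then show ?thesis
    using has_derivative_zero_constant[OF convex_UNIV] that by blast
qed

locale sum_density =
  fixes p :: "real^'d^'n \<Rightarrow> real" and q :: "real^'d \<Rightarrow> real"
  assumes p_nonneg: "\<And>x. 0 \<le> p x"
    and p_int: "integrable lborel p" and p_one: "(\<integral>x. p x \<partial>lborel) = 1"
    and p_diff: "\<And>x. p differentiable (at x)"
    and p_C1: "\<And>i. continuous_on UNIV (partial_grad p i)"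
    and q_nonneg: "\<And>w. 0 \<le> q w"
    and W_density: "distributed (density lborel (\<lambda>x. ennreal (p x))) lborel
                       (\<lambda>x. \<Sum>i\<in>UNIV. x $ i) (\<lambda>w. ennreal (q w))"
    and q_diff: "\<And>w. q differentiable (at w)"
    and q_C1: "continuous_on UNIV (grad q)"
    and fisher_X_finite: "\<And>i. integrable lborel (\<lambda>x. (norm (partial_grad p i x))\<^sup>2 / p x)"
    and fisher_W_finite: "integrable lborel (\<lambda>w. (norm (grad q w))\<^sup>2 / q w)"
begin

lemma p_continuous: "continuous_on UNIV p" and q_continuous: "continuous_on UNIV q"
  using p_diff q_diff
  by (auto intro!: differentiable_imp_continuous_on simp: differentiable_on_def differentiable_at_withinI)

lemma p_measurable[measurable]: "p \<in> borel_measurable borel"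
  and q_measurable[measurable]: "q \<in> borel_measurable borel"
  and partial_grad_measurable[measurable]: "partial_grad p i \<in> borel_measurable borel"
  and grad_q_measurable[measurable]: "grad q \<in> borel_measurable borel"
  and sum_measurable[measurable]: "(\<lambda>x::real^'d^'n. \<Sum>j\<in>UNIV. x $ j) \<in> borel_measurable borel"
  using p_continuous q_continuous p_C1 q_C1
  by (auto intro!: borel_measurable_continuous_onI continuous_intros)

lemma integral_q_mult_eq:
  assumes [measurable]: "g \<in> borel_measurable borel"
  shows "(\<integral>w. q w * g w \<partial>lborel) = (\<integral>x. p x * g (\<Sum>j\<in>UNIV. x $ j) \<partial>lborel)"
proof -
  have "(\<integral>w. q w * g w \<partial>lborel) = (\<integral>x. g (\<Sum>j\<in>UNIV. x $ j) \<partial>density lborel (\<lambda>x. ennreal (p x)))"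
    by (rule distributed_integral[OF W_density]) (auto simp: q_nonneg)
  also have "\<dots> = (\<integral>x. p x * g (\<Sum>j\<in>UNIV. x $ j) \<partial>lborel)"
    by (subst integral_density) (auto simp: p_nonneg)
  finally show ?thesis .
qed

lemma q_int: "integrable lborel q"
proof (rule integrableI_nonneg)
  show "q \<in> borel_measurable lborel" by simp
  show "AE x in lborel. 0 \<le> q x" by (simp add: q_nonneg)
  have "(\<integral>\<^sup>+w. ennreal (q w) * 1 \<partial>lborel) = (\<integral>\<^sup>+x. 1 \<partial>density lborel (\<lambda>x. ennreal (p x)))"
    by (rule distributed_nn_integral[OF W_density]) simp
  also have "\<dots> = (\<integral>\<^sup>+x. ennreal (p x) \<partial>lborel)"
    by (subst nn_integral_density) auto
  also have "\<dots> = ennreal 1"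
    using nn_integral_eq_integral[OF p_int] p_nonneg p_one by simp
  finally show "(\<integral>\<^sup>+x. ennreal (q x) \<partial>lborel) < \<infinity>" by simp
qed

lemma q_one: "(\<integral>w. q w \<partial>lborel) = 1"
  using integral_q_mult_eq[of "\<lambda>_. 1"] p_one by simp

lemma grad_q_eq_0: "q w = 0 \<Longrightarrow> grad q w = 0"
  using frechet_derivative_zero_at_min[of q w, OF q_nonneg _ q_diff] by (simp add: grad_def vec_eq_iff)

lemma partial_grad_eq_0: "p x = 0 \<Longrightarrow> partial_grad p i x = 0"
  using frechet_derivative_zero_at_min[of p x, OF p_nonneg _ p_diff] by (simp add: partial_grad_def vec_eq_iff)

lemma integrable_grad_q_component: "integrable lborel (\<lambda>w. grad q w $ k)"
proof (rule Bochner_Integration.integrable_bound)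
  show "integrable lborel (\<lambda>w. norm (grad q w))"
    by (rule integrable_norm_if_integrable_norm_squared_divide[OF _ q_int q_nonneg grad_q_eq_0 fisher_W_finite])
      simp
qed (auto intro!: AE_I2 component_le_norm_cart borel_measurable_continuous_onI continuous_on_component q_C1)

lemma integrable_partial_grad_component: "integrable lborel (\<lambda>x. partial_grad p i x $ k)"
proof (rule Bochner_Integration.integrable_bound)
  show "integrable lborel (\<lambda>x. norm (partial_grad p i x))"
    by (rule integrable_norm_if_integrable_norm_squared_divide[OF _ p_int p_nonneg partial_grad_eq_0 fisher_X_finite])
      simp
qed (auto intro!: AE_I2 component_le_norm_cart borel_measurable_continuous_onI continuous_on_component p_C1)

lemma integral_increment_q_eq:
  assumes [measurable]: "\<phi> \<in> borel_measurable borel" and \<phi>_bound: "\<And>w. \<bar>\<phi> w\<bar> \<le> B"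
    and v: "(\<Sum>j\<in>UNIV. v $ j) = e"
  shows "(\<integral>w. (q (w + e) - q w) * \<phi> w \<partial>lborel)
       = (\<integral>x. (p (x + v) - p x) * \<phi> (\<Sum>j\<in>UNIV. x $ j) \<partial>lborel)"
proof -
  have shifted_q: "integrable lborel (\<lambda>w. q (w + e))" and shifted_p: "integrable lborel (\<lambda>x. p (x + v))"
    using lborel_integrable_translate[OF q_measurable] lborel_integrable_translate[OF p_measurable]
      q_int p_int by auto
  have int: "integrable lborel (\<lambda>w. q (w + e) * \<phi> w)" "integrable lborel (\<lambda>w. q w * \<phi> w)"
    "integrable lborel (\<lambda>x. p (x + v) * \<phi> (\<Sum>j\<in>UNIV. x $ j))"
    "integrable lborel (\<lambda>x. p x * \<phi> (\<Sum>j\<in>UNIV. x $ j))"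
    by (auto intro!: integrable_mult_bounded shifted_q shifted_p q_int p_int \<phi>_bound)
  have "(\<integral>w. q (w + e) * \<phi> w \<partial>lborel) = (\<integral>w. q w * \<phi> (w - e) \<partial>lborel)"
    using lborel_integral_translate[of "\<lambda>w. q w * \<phi> (w - e)" e] by simp
  also have "\<dots> = (\<integral>x. p x * \<phi> ((\<Sum>j\<in>UNIV. x $ j) - e) \<partial>lborel)"
    by (rule integral_q_mult_eq) simp
  also have "\<dots> = (\<integral>x. p (x + v) * \<phi> ((\<Sum>j\<in>UNIV. (x + v) $ j) - e) \<partial>lborel)"
    using lborel_integral_translate[of "\<lambda>x. p x * \<phi> ((\<Sum>j\<in>UNIV. x $ j) - e)" v] by simp
  also have "\<dots> = (\<integral>x. p (x + v) * \<phi> (\<Sum>j\<in>UNIV. x $ j) \<partial>lborel)"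
    by (simp add: sum.distrib v)
  finally have "(\<integral>w. q (w + e) * \<phi> w \<partial>lborel) = (\<integral>x. p (x + v) * \<phi> (\<Sum>j\<in>UNIV. x $ j) \<partial>lborel)" .
  moreover have "(\<integral>w. q w * \<phi> w \<partial>lborel) = (\<integral>x. p x * \<phi> (\<Sum>j\<in>UNIV. x $ j) \<partial>lborel)"
    by (rule integral_q_mult_eq) simp
  ultimately show ?thesis
    by (simp add: left_diff_distrib Bochner_Integration.integral_diff[OF int(1,2)]
        Bochner_Integration.integral_diff[OF int(3,4)])
qed

lemma integral_grad_q_component_eq:
  assumes \<phi>: "continuous_on UNIV \<phi>" "\<And>w. \<bar>\<phi> w\<bar> \<le> B"
  shows "(\<integral>w. grad q w $ k * \<phi> w \<partial>lborel)
       = (\<integral>x. partial_grad p i x $ k * \<phi> (\<Sum>j\<in>UNIV. x $ j) \<partial>lborel)"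
proof (rule integral_directional_derivative_eq[OF q_diff _ _ integrable_grad_q_component
        p_diff _ _ integrable_partial_grad_component \<phi>])
  let ?e = "axis k 1 :: real^'d" and ?v = "axis i (axis k 1) :: real^'d^'n"
  show "grad q w $ k = frechet_derivative q (at w) ?e" for w by (simp add: grad_def)
  show "partial_grad p i x $ k = frechet_derivative p (at x) ?v" for x by (simp add: partial_grad_def)
  show "continuous_on UNIV (\<lambda>w. grad q w $ k)" "continuous_on UNIV (\<lambda>x. partial_grad p i x $ k)"
    by (intro continuous_on_component q_C1 p_C1)+
  show "continuous_on UNIV (\<lambda>x. \<phi> (\<Sum>j\<in>UNIV. x $ j))"
    by (rule continuous_on_compose2[OF \<phi>(1)]) (auto intro!: continuous_intros)
  show "\<bar>\<phi> (\<Sum>j\<in>UNIV. x $ j)\<bar> \<le> B" for x :: "real^'d^'n" by (rule \<phi>(2))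
  have "\<phi> \<in> borel_measurable borel" using \<phi>(1) by (rule borel_measurable_continuous_onI)
  moreover have "(\<Sum>j\<in>UNIV. (t *\<^sub>R ?v) $ j) = t *\<^sub>R ?e" for t
    by (simp add: axis_def if_distrib cong: if_cong)
  ultimately show "(\<integral>w. (q (w + t *\<^sub>R ?e) - q w) * \<phi> w \<partial>lborel)
      = (\<integral>x. (p (x + t *\<^sub>R ?v) - p x) * \<phi> (\<Sum>j\<in>UNIV. x $ j) \<partial>lborel)" for t
    using integral_increment_q_eq \<phi>(2) by blast
qed

lemma integral_grad_q_inner_eq:
  fixes l :: "real^'n" and \<psi> :: "real^'d \<Rightarrow> real^'d"
  assumes \<psi>_cont: "continuous_on UNIV \<psi>" and \<psi>_bound: "\<And>w. norm (\<psi> w) \<le> B"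
  shows "(\<Sum>i\<in>UNIV. l $ i) * (\<integral>w. grad q w \<bullet> \<psi> w \<partial>lborel)
     = (\<integral>x. (\<Sum>i\<in>UNIV. l $ i *\<^sub>R partial_grad p i x) \<bullet> \<psi> (\<Sum>j\<in>UNIV. x $ j) \<partial>lborel)"
proof -
  let ?S = "\<lambda>x::real^'d^'n. \<Sum>j\<in>UNIV. x $ j"
  have component_cont: "continuous_on UNIV (\<lambda>w. \<psi> w $ k)" for k
    by (intro continuous_on_component \<psi>_cont)
  have component_bound: "\<bar>\<psi> w $ k\<bar> \<le> B" for w k
    using component_le_norm_cart[of "\<psi> w" k] \<psi>_bound[of w] by linarith
  have [measurable]: "\<psi> \<in> borel_measurable borel" "(\<lambda>w. \<psi> w $ k) \<in> borel_measurable borel" for k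
    using \<psi>_cont component_cont by (auto intro: borel_measurable_continuous_onI)
  have q_terms: "integrable lborel (\<lambda>w. grad q w $ k * \<psi> w $ k)" for k
    by (rule integrable_mult_bounded[OF integrable_grad_q_component _ component_bound]) simp
  have p_terms: "integrable lborel (\<lambda>x. partial_grad p i x $ k * \<psi> (?S x) $ k)" for i k
    by (rule integrable_mult_bounded[OF integrable_partial_grad_component _ component_bound]) simp
  have block: "(\<integral>w. grad q w \<bullet> \<psi> w \<partial>lborel) = (\<Sum>k\<in>UNIV. \<integral>x. partial_grad p i x $ k * \<psi> (?S x) $ k \<partial>lborel)" for i
    using integral_grad_q_component_eq[OF component_cont component_bound]
    by (simp add: inner_vec_def Bochner_Integration.integral_sum q_terms)
  have "(\<Sum>i\<in>UNIV. l $ i) * (\<integral>w. grad q w \<bullet> \<psi> w \<partial>lborel)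
      = (\<Sum>i\<in>UNIV. l $ i * (\<Sum>k\<in>UNIV. \<integral>x. partial_grad p i x $ k * \<psi> (?S x) $ k \<partial>lborel))"
    by (simp add: sum_distrib_right block[symmetric])
  also have "\<dots> = (\<integral>x. (\<Sum>i\<in>UNIV. l $ i * (\<Sum>k\<in>UNIV. partial_grad p i x $ k * \<psi> (?S x) $ k)) \<partial>lborel)"
    by (simp add: Bochner_Integration.integral_sum p_terms Bochner_Integration.integrable_sum)
  also have "\<dots> = (\<integral>x. (\<Sum>i\<in>UNIV. l $ i *\<^sub>R partial_grad p i x) \<bullet> \<psi> (?S x) \<partial>lborel)"
    by (simp only: inner_sum_left inner_scaleR_left) (simp only: inner_vec_def inner_real_def)
  finally show ?thesis .
qed

lemma integrable_fisher_entry_integrand: "integrable lborel (\<lambda>x. (partial_grad p i x \<bullet> partial_grad p j x) / p x)"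
proof (rule Bochner_Integration.integrable_bound[where f="\<lambda>x. ((norm (partial_grad p i x))\<^sup>2 / p x + (norm (partial_grad p j x))\<^sup>2 / p x) / 2"])
  show "integrable lborel (\<lambda>x. ((norm (partial_grad p i x))\<^sup>2 / p x + (norm (partial_grad p j x))\<^sup>2 / p x) / 2)"
    using fisher_X_finite[of i] fisher_X_finite[of j] by auto
  show "(\<lambda>x. (partial_grad p i x \<bullet> partial_grad p j x) / p x) \<in> borel_measurable lborel" by measurable
  show "AE x in lborel. norm ((partial_grad p i x \<bullet> partial_grad p j x) / p x) \<le>
      norm (((norm (partial_grad p i x))\<^sup>2 / p x + (norm (partial_grad p j x))\<^sup>2 / p x) / 2)"
  proof (rule AE_I2)
    fix x
    let ?a = "partial_grad p i x" and ?b = "partial_grad p j x"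
    have "\<bar>?a \<bullet> ?b\<bar> \<le> ((norm ?a)\<^sup>2 + (norm ?b)\<^sup>2) / 2"
      using Cauchy_Schwarz_ineq2[of ?a ?b] sum_squares_bound[of "norm ?a" "norm ?b"]
      by (simp add: power2_eq_square field_simps)
    then have "\<bar>?a \<bullet> ?b\<bar> / p x \<le> ((norm ?a)\<^sup>2 + (norm ?b)\<^sup>2) / 2 / p x"
      by (rule divide_right_mono[OF _ p_nonneg])
    moreover have "0 \<le> ((norm ?a)\<^sup>2 / p x + (norm ?b)\<^sup>2 / p x) / 2" using p_nonneg[of x] by simp
    ultimately show "norm ((?a \<bullet> ?b) / p x) \<le> norm (((norm ?a)\<^sup>2 / p x + (norm ?b)\<^sup>2 / p x) / 2)"
      using p_nonneg[of x] by (simp add: abs_div add_divide_distrib)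
  qed
qed

lemma fisher_form_eq:
  fixes l :: "real^'n"
  shows "integrable lborel (\<lambda>x. (norm (\<Sum>i\<in>UNIV. l $ i *\<^sub>R partial_grad p i x))\<^sup>2 / p x)"
    and "(\<Sum>i\<in>UNIV. \<Sum>j\<in>UNIV. l $ i * l $ j * fisher_entry p i j)
       = (\<integral>x. (norm (\<Sum>i\<in>UNIV. l $ i *\<^sub>R partial_grad p i x))\<^sup>2 / p x \<partial>lborel)"
proof -
  have expand: "(\<lambda>x. (norm (\<Sum>i\<in>UNIV. l $ i *\<^sub>R partial_grad p i x))\<^sup>2 / p x)
      = (\<lambda>x. \<Sum>i\<in>UNIV. \<Sum>j\<in>UNIV. l $ i * l $ j * ((partial_grad p i x \<bullet> partial_grad p j x) / p x))"
    by (simp add: norm_sum_scaleR_squared sum_divide_distrib)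
  show "integrable lborel (\<lambda>x. (norm (\<Sum>i\<in>UNIV. l $ i *\<^sub>R partial_grad p i x))\<^sup>2 / p x)"
    unfolding expand
    by (intro Bochner_Integration.integrable_sum integrable_mult_right integrable_fisher_entry_integrand)
  show "(\<Sum>i\<in>UNIV. \<Sum>j\<in>UNIV. l $ i * l $ j * fisher_entry p i j)
       = (\<integral>x. (norm (\<Sum>i\<in>UNIV. l $ i *\<^sub>R partial_grad p i x))\<^sup>2 / p x \<partial>lborel)"
  proof -
    have "(\<integral>x. (\<Sum>i\<in>UNIV. \<Sum>j\<in>UNIV. l $ i * l $ j * ((partial_grad p i x \<bullet> partial_grad p j x) / p x)) \<partial>lborel)
        = (\<Sum>i\<in>UNIV. \<Sum>j\<in>UNIV. \<integral>x. l $ i * l $ j * ((partial_grad p i x \<bullet> partial_grad p j x) / p x) \<partial>lborel)"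
      by (simp only: Bochner_Integration.integral_sum Bochner_Integration.integrable_sum
          integrable_mult_right integrable_fisher_entry_integrand)
    then show ?thesis
      by (simp only: expand integral_mult_right_zero fisher_entry_def)
  qed
qed

lemma fisher_form_nonneg: "0 \<le> (\<Sum>i\<in>UNIV. \<Sum>j\<in>UNIV. l $ i * l $ j * fisher_entry p i j)"
  unfolding fisher_form_eq(2) by (rule integral_nonneg_AE) (simp add: p_nonneg)

lemma fisher_form_bound:
  fixes l :: "real^'n" and \<psi> :: "real^'d \<Rightarrow> real^'d"
  assumes \<psi>_cont: "continuous_on UNIV \<psi>" and \<psi>_bound: "\<And>w. norm (\<psi> w) \<le> B"
  shows "((\<Sum>i\<in>UNIV. l $ i) * (\<integral>w. grad q w \<bullet> \<psi> w \<partial>lborel))\<^sup>2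
       \<le> (\<Sum>i\<in>UNIV. \<Sum>j\<in>UNIV. l $ i * l $ j * fisher_entry p i j) * (\<integral>w. q w * (norm (\<psi> w))\<^sup>2 \<partial>lborel)"
proof -
  define G where "G x = (\<Sum>i\<in>UNIV. l $ i *\<^sub>R partial_grad p i x)" for x
  have [measurable]: "\<psi> \<in> borel_measurable borel"
    using \<psi>_cont by (rule borel_measurable_continuous_onI)
  have "integrable lborel (\<lambda>x. p x * (norm (\<psi> (\<Sum>j\<in>UNIV. x $ j)))\<^sup>2)"
    using \<psi>_bound norm_ge_zero[of "\<psi> _"] order_trans
    by (intro integrable_mult_bounded[OF p_int, where B = "B\<^sup>2"]) (auto intro!: power_mono)
  then have "(\<integral>x. G x \<bullet> \<psi> (\<Sum>j\<in>UNIV. x $ j) \<partial>lborel)\<^sup>2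
      \<le> (\<integral>x. (norm (G x))\<^sup>2 / p x \<partial>lborel) * (\<integral>x. p x * (norm (\<psi> (\<Sum>j\<in>UNIV. x $ j)))\<^sup>2 \<partial>lborel)"
    using fisher_form_eq(1)[of l]
    by (intro weighted_Cauchy_Schwarz_integral) (auto simp: G_def p_nonneg partial_grad_eq_0)
  then show ?thesis
    by (simp add: integral_grad_q_inner_eq[OF \<psi>_cont \<psi>_bound] fisher_form_eq(2)
        integral_q_mult_eq[of "\<lambda>w. (norm (\<psi> w))\<^sup>2"] G_def)
qed

abbreviation score_approx :: "nat \<Rightarrow> real^'d \<Rightarrow> real^'d"
  where "score_approx m \<equiv> regularized_score (inverse (Suc m)) q (grad q)"

lemma tendsto_integral_score_approx:
  "(\<lambda>m. \<integral>w. grad q w \<bullet> score_approx m w \<partial>lborel) \<longlonglongrightarrow> fisher_info q"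
  unfolding fisher_info_def
proof (rule integral_dominated_convergence[where w = "\<lambda>w. (norm (grad q w))\<^sup>2 / q w"])
  show "integrable lborel (\<lambda>w. (norm (grad q w))\<^sup>2 / q w)" by (rule fisher_W_finite)
  show "AE w in lborel. (\<lambda>m. grad q w \<bullet> score_approx m w) \<longlonglongrightarrow> (norm (grad q w))\<^sup>2 / q w"
    by (intro AE_I2 tendsto_inner_regularized_score q_nonneg grad_q_eq_0)
  show "AE w in lborel. norm (grad q w \<bullet> score_approx m w) \<le> (norm (grad q w))\<^sup>2 / q w" for m
  proof (rule AE_I2)
    have \<epsilon>: "0 < inverse (real (Suc m))" by simp
    show "norm (grad q w \<bullet> score_approx m w) \<le> (norm (grad q w))\<^sup>2 / q w" for w
      using regularized_score_inner_bounds(2,3)[where q = q and g = "grad q", OF \<epsilon> q_nonneg] grad_q_eq_0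
      by simp
  qed
  show "(\<lambda>w. grad q w \<bullet> score_approx m w) \<in> borel_measurable lborel" for m
    by (simp add: regularized_score_def)
qed simp

lemma fisher_form_ge_score_approx:
  fixes l :: "real^'n"
  shows "(\<Sum>i\<in>UNIV. l $ i)\<^sup>2 * (\<integral>w. grad q w \<bullet> score_approx m w \<partial>lborel)
       \<le> (\<Sum>i\<in>UNIV. \<Sum>j\<in>UNIV. l $ i * l $ j * fisher_entry p i j)"
    (is "?L\<^sup>2 * _ \<le> ?Q")
proof -
  define A where "A = (\<integral>w. grad q w \<bullet> score_approx m w \<partial>lborel)"
  have \<epsilon>: "0 < inverse (real (Suc m))" by simp
  have cont: "continuous_on UNIV (score_approx m)"
    by (rule continuous_on_regularized_score[OF q_continuous q_C1 \<epsilon>])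
  have [measurable]: "score_approx m \<in> borel_measurable borel"
    using cont by (rule borel_measurable_continuous_onI)
  note bound = norm_regularized_score_le[OF \<epsilon>, of q "grad q"]
  note inner_bounds = regularized_score_inner_bounds[where q = q and g = "grad q", OF \<epsilon> q_nonneg]
  have "0 \<le> A" unfolding A_def by (intro integral_nonneg_AE AE_I2 inner_bounds(2))
  have "(\<integral>w. q w * (norm (score_approx m w))\<^sup>2 \<partial>lborel) \<le> A"
    unfolding A_def
  proof (rule integral_mono[OF _ _ inner_bounds(1)])
    show "integrable lborel (\<lambda>w. q w * (norm (score_approx m w))\<^sup>2)"
      using bound norm_ge_zero[of "score_approx m _"] order_trans
      by (intro integrable_mult_bounded[OF q_int, where B = "(1 / inverse (Suc m))\<^sup>2"])
        (auto intro!: power_mono simp del: of_nat_Suc)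
    show "integrable lborel (\<lambda>w. grad q w \<bullet> score_approx m w)"
    proof (rule Bochner_Integration.integrable_bound[OF fisher_W_finite])
      show "(\<lambda>w. grad q w \<bullet> score_approx m w) \<in> borel_measurable lborel" by measurable
      show "AE w in lborel. norm (grad q w \<bullet> score_approx m w) \<le> norm ((norm (grad q w))\<^sup>2 / q w)"
        using inner_bounds(2) inner_bounds(3)[OF grad_q_eq_0] q_nonneg by (intro AE_I2) simp
    qed
  qed
  then have "(?L * A)\<^sup>2 \<le> ?Q * A"
    using fisher_form_bound[OF cont bound, of l] fisher_form_nonneg[of l]
    unfolding A_def by (meson mult_left_mono order_trans)
  then have "A * (?L\<^sup>2 * A) \<le> A * ?Q" by (simp add: power2_eq_square algebra_simps)
  then show ?thesis
    using \<open>0 \<le> A\<close> fisher_form_nonneg[of l] unfolding A_def[symmetric]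
    by (cases "A = 0") (auto simp: mult_le_cancel_left)
qed

lemma fisher_info_quadratic_le:
  fixes l :: "real^'n"
  shows "(\<Sum>i\<in>UNIV. l $ i)\<^sup>2 * fisher_info q \<le> (\<Sum>i\<in>UNIV. \<Sum>j\<in>UNIV. l $ i * l $ j * fisher_entry p i j)"
  using LIMSEQ_le_const2[OF tendsto_mult_left[OF tendsto_integral_score_approx]] fisher_form_ge_score_approx
  by blast

lemma fisher_info_pos: "0 < fisher_info q"
proof -
  have "0 \<le> fisher_info q"
    unfolding fisher_info_def by (rule integral_nonneg_AE) (simp add: q_nonneg)
  moreover have "fisher_info q \<noteq> 0"
  proof
    assume "fisher_info q = 0"
    then have "AE w in lborel. (norm (grad q w))\<^sup>2 / q w = 0"
      using integral_nonneg_eq_0_iff_AE[OF fisher_W_finite] q_nonneg by (simp add: fisher_info_def)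
    then have "AE w in lebesgue. w \<in> {w. grad q w = 0}"
      by (intro AE_completion, elim eventually_mono) (auto dest: grad_q_eq_0)
    moreover have "closed {w. grad q w = 0}"
      using continuous_closed_preimage_constant[OF q_C1 closed_UNIV] by simp
    ultimately have "grad q w = 0" for w
      using mem_closed_if_AE_lebesgue by blast
    then obtain c where "\<And>w. q w = c" using constant_if_grad_eq_0 q_diff by blast
    then have "(\<integral>w. q w \<partial>lborel) = 0" by (simp add: measure_def)
    then show False using q_one by simp
  qed
  ultimately show ?thesis by simp
qed

lemma inverse_fisher_info_ge:
  assumes inv: "invertible (fisher_matrix p)"
  shows "vec 1 \<bullet> (matrix_inv (fisher_matrix p) *v vec 1) \<le> 1 / fisher_info q"
proof -
  define \<mu> where "\<mu> = matrix_inv (fisher_matrix p) *v vec 1"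
  define s where "s = vec 1 \<bullet> \<mu>"
  have "fisher_matrix p *v \<mu> = vec 1"
    unfolding \<mu>_def matrix_vector_mul_assoc matrix_mul_matrix_inv[OF inv] by simp
  then have row: "(\<Sum>j\<in>UNIV. fisher_entry p i j * \<mu> $ j) = 1" for i
    by (simp add: matrix_vector_mult_def fisher_matrix_def vec_eq_iff)
  have s_sum: "s = (\<Sum>i\<in>UNIV. \<mu> $ i)" by (simp add: s_def inner_vec_def)
  have "(\<Sum>i\<in>UNIV. \<Sum>j\<in>UNIV. \<mu> $ i * \<mu> $ j * fisher_entry p i j)
      = (\<Sum>i\<in>UNIV. \<mu> $ i * (\<Sum>j\<in>UNIV. fisher_entry p i j * \<mu> $ j))"
    by (simp add: sum_distrib_left mult_ac)
  also have "\<dots> = s" by (simp add: row s_sum)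
  finally have quadratic: "s\<^sup>2 * fisher_info q \<le> s"
    using fisher_info_quadratic_le[of \<mu>] s_sum by simp
  have "s * fisher_info q \<le> 1"
  proof (cases "s \<le> 0")
    case True
    then show ?thesis using fisher_info_pos by (simp add: mult_nonpos_nonneg order_trans[of _ 0])
  next
    case False
    then show ?thesis using quadratic by (simp add: power2_eq_square mult.assoc)
  qed
  then show ?thesis
    using fisher_info_pos by (simp add: s_def \<mu>_def pos_le_divide_eq)
qed

end

theorem proposition1:
  fixes p :: "real^'d^'n \<Rightarrow> real" and q :: "real^'d \<Rightarrow> real"
  assumes p_nonneg: "\<And>x. 0 \<le> p x"
    and p_int: "integrable lborel p" and p_one: "(\<integral>x. p x \<partial>lborel) = 1"
    and p_diff: "\<And>x. p differentiable (at x)"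
    and p_C1: "\<And>i. continuous_on UNIV (partial_grad p i)"
    and q_nonneg: "\<And>w. 0 \<le> q w"
    and W_density: "distributed (density lborel (\<lambda>x. ennreal (p x))) lborel
                       (\<lambda>x. \<Sum>i\<in>UNIV. x $ i) (\<lambda>w. ennreal (q w))"
    and q_diff: "\<And>w. q differentiable (at w)"
    and q_C1: "continuous_on UNIV (grad q)"
    and moment2: "integrable lborel (\<lambda>x. (norm x)\<^sup>2 * p x)"
    and entropy_X: "integrable lborel (\<lambda>x. p x * ln (p x))"
    and entropy_W: "integrable lborel (\<lambda>w. q w * ln (q w))"
    and fisher_X_finite: "\<And>i. integrable lborel (\<lambda>x. (norm (partial_grad p i x))\<^sup>2 / p x)"
    and fisher_W_finite: "integrable lborel (\<lambda>w. (norm (grad q w))\<^sup>2 / q w)"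
  shows "(\<forall>l :: real^'n. (\<Sum>i\<in>UNIV. l $ i)\<^sup>2 * fisher_info q
            \<le> (\<Sum>i\<in>UNIV. \<Sum>j\<in>UNIV. l $ i * l $ j * fisher_entry p i j))
       \<and> (invertible (fisher_matrix p) \<longrightarrow>
            1 / fisher_info q \<ge> vec 1 \<bullet> (matrix_inv (fisher_matrix p) *v vec 1))"
proof -
  \<comment> \<open>The moment and entropy hypotheses are standing assumptions of the setting; the argument does not use them.\<close>
  interpret sum_density p q
    using p_nonneg p_int p_one p_diff p_C1 q_nonneg W_density q_diff q_C1 fisher_X_finite fisher_W_finite
    by unfold_locales
  show ?thesis
    using fisher_info_quadratic_le inverse_fisher_info_ge by blast
qed

end
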